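(* Let $G$ be a $k$-connected cograph on $n$ vertices with cotree $T$, let $w_1,\ldots,w_t$ be the children of the root of $T$, and let $G_i$ be the subgraph induced by the leaves of the subtree rooted at $w_i$. For every $i$ with $|V(G_i)|=n-k$, let $x_i\in V(G_i)$ be a vertex minimizing $|\overline{N}_G(x_i)|$. Then every set $E_{ca}\subseteq E(\overline{G})$ such that $G\cup E_{ca}$ is a $(k+1)$-connected cograph satisfies $|E_{ca}|\geq \sum_{i:\,|V(G_i)|=n-k}|\overline{N}_G(x_i)|$.
   Context: A cograph is a graph that can be built from single vertices by repeatedly taking disjoint unions (label 0) and joins (label 1); equivalently a graph with no induced path on four vertices. The cotree of a cograph is the unique rooted tree whose leaves are the vertices, internal nodes labelled 0/1 with at least two children and labels alternating along root-to-leaf paths, two vertices being adjacent iff their lowest common ancestor is labelled 1; for connected cographs the root is labelled 1. $\overline{G}$ is the complement of $G$, $\overline{N}_G(v)=\{u:\{u,v\}\in E(\overline{G})\}$, and $G\cup F$ is the graph $(V(G),E(G)\cup F)$. A vertex separator of a connected graph is a set whose removal disconnects it; minimal if no proper subset is a vertex separator; a minimum vertex separator is a minimal one of least size. The paper calls a graph $k$-connected if there exists a minimum vertex separator of size $k$. *)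

theory Defs
  imports Main
begin

definition simple_graph :: "'a set \<Rightarrow> 'a set set \<Rightarrow> bool" where
  "simple_graph V E \<longleftrightarrow> finite V \<and>
     (\<forall>e\<in>E. \<exists>u v. e = {u, v} \<and> u \<noteq> v \<and> u \<in> V \<and> v \<in> V)"

definition induced_edges :: "'a set set \<Rightarrow> 'a set \<Rightarrow> 'a set set" where
  "induced_edges E W = {e \<in> E. e \<subseteq> W}"

definition connected_graph :: "'a set \<Rightarrow> 'a set set \<Rightarrow> bool" where
  "connected_graph V E \<longleftrightarrow>
     (\<forall>u\<in>V. \<forall>v\<in>V. (\<lambda>x y. x \<in> V \<and> y \<in> V \<and> {x, y} \<in> E)\<^sup>*\<^sup>* u v)"

definition compl_edges :: "'a set \<Rightarrow> 'a set set \<Rightarrow> 'a set set" where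
  "compl_edges V E = {{u, v} | u v. u \<in> V \<and> v \<in> V \<and> u \<noteq> v \<and> {u, v} \<notin> E}"

definition co_nbrs :: "'a set \<Rightarrow> 'a set set \<Rightarrow> 'a \<Rightarrow> 'a set" where
  "co_nbrs V E v = {u \<in> V. u \<noteq> v \<and> {u, v} \<notin> E}"

definition vertex_separator :: "'a set \<Rightarrow> 'a set set \<Rightarrow> 'a set \<Rightarrow> bool" where
  "vertex_separator V E S \<longleftrightarrow> connected_graph V E \<and> S \<subseteq> V \<and>
     \<not> connected_graph (V - S) (induced_edges E (V - S))"

definition minimal_vertex_separator :: "'a set \<Rightarrow> 'a set set \<Rightarrow> 'a set \<Rightarrow> bool" where
  "minimal_vertex_separator V E S \<longleftrightarrow> vertex_separator V E S \<and>
     (\<forall>S'. S' \<subset> S \<longrightarrow> \<not> vertex_separator V E S')"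

definition minimum_vertex_separator :: "'a set \<Rightarrow> 'a set set \<Rightarrow> 'a set \<Rightarrow> bool" where
  "minimum_vertex_separator V E S \<longleftrightarrow> minimal_vertex_separator V E S \<and>
     (\<forall>S'. minimal_vertex_separator V E S' \<longrightarrow> card S \<le> card S')"

text \<open>The paper's notion: k-connected iff some minimum vertex separator has size k.\<close>
definition k_connected :: "'a set \<Rightarrow> 'a set set \<Rightarrow> nat \<Rightarrow> bool" where
  "k_connected V E k \<longleftrightarrow> (\<exists>S. minimum_vertex_separator V E S \<and> card S = k)"

inductive cograph :: "'a set \<Rightarrow> 'a set set \<Rightarrow> bool" where
  single: "cograph {v} {}"
| union: "\<lbrakk>cograph V1 E1; cograph V2 E2; V1 \<inter> V2 = {}\<rbrakk>
          \<Longrightarrow> cograph (V1 \<union> V2) (E1 \<union> E2)"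
| join: "\<lbrakk>cograph V1 E1; cograph V2 E2; V1 \<inter> V2 = {}\<rbrakk>
          \<Longrightarrow> cograph (V1 \<union> V2) (E1 \<union> E2 \<union> {{u, v} | u v. u \<in> V1 \<and> v \<in> V2})"

text \<open>Cotrees: leaves are vertices, internal nodes carry a label (True = 1 = join,
  False = 0 = union) and a list of children.\<close>
datatype 'a cotree = Leaf 'a | Node bool "'a cotree list"

fun ct_leaves :: "'a cotree \<Rightarrow> 'a set" where
  "ct_leaves (Leaf v) = {v}"
| "ct_leaves (Node b ts) = \<Union> (set (map ct_leaves ts))"

fun ct_label_differs :: "bool \<Rightarrow> 'a cotree \<Rightarrow> bool" where
  "ct_label_differs b (Leaf v) = True"
| "ct_label_differs b (Node c ts) = (c \<noteq> b)"

fun ct_wf :: "'a cotree \<Rightarrow> bool" where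
  "ct_wf (Leaf v) = True"
| "ct_wf (Node b ts) = (length ts \<ge> 2 \<and> (\<forall>t\<in>set ts. ct_wf t \<and> ct_label_differs b t) \<and>
      (\<forall>i<length ts. \<forall>j<length ts. i \<noteq> j \<longrightarrow> ct_leaves (ts!i) \<inter> ct_leaves (ts!j) = {}))"

text \<open>Edges determined by the cotree: u v adjacent iff their lowest common ancestor
  is labelled 1, i.e. they lie in different children of a node labelled True.\<close>
fun ct_edges :: "'a cotree \<Rightarrow> 'a set set" where
  "ct_edges (Leaf v) = {}"
| "ct_edges (Node b ts) = \<Union> (set (map ct_edges ts)) \<union>
      (if b then {{u, v} | u v i j. i < length ts \<and> j < length ts \<and> i \<noteq> j \<and>
                   u \<in> ct_leaves (ts!i) \<and> v \<in> ct_leaves (ts!j)} else {})"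

definition is_cotree :: "'a set \<Rightarrow> 'a set set \<Rightarrow> 'a cotree \<Rightarrow> bool" where
  "is_cotree V E T \<longleftrightarrow> ct_wf T \<and> ct_leaves T = V \<and> ct_edges T = E"

end

theory Submission
  imports Defs
begin

(* The root of the cotree is a join, since G is connected, so the co-neighbours of a vertex
  all lie in its own root child.  Let W be a child with n - k vertices.  In G \<union> E_ca the set
  W induces a connected graph, for otherwise V - W would be a separator of size k; being a
  connected cograph it is a join of two parts A and B.  In G itself W induces a disconnected
  graph (its cotree node is a union), so A and B cannot both contain a vertex adjacent to all of
  the other part.  Say every vertex u of A has a non-neighbour f u in B.  Then for w in A the
  map sending a co-neighbour u of w to {u, f u} if u is in A and to {u, w} if u is in B is an
  injection into the added edges inside W.  Summing over the disjoint children gives the bound. *)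

lemma connected_graph_edge_closed:
  assumes "connected_graph W E" "u \<in> W" "u \<in> P" "v \<in> W"
    and "\<forall>e\<in>E. e \<subseteq> P \<or> e \<inter> P = {}"
  shows "v \<in> P"
proof -
  have "(\<lambda>x y. x \<in> W \<and> y \<in> W \<and> {x, y} \<in> E)\<^sup>*\<^sup>* u v"
    using assms(1,2,4) unfolding connected_graph_def by blast
  then show ?thesis
    using assms(3,5) by (induction rule: rtranclp_induct) auto
qed

lemma connected_graph_if_cross_dominated:
  assumes "A \<union> B = W" "a \<in> A" "b \<in> B"
    and "\<forall>b'\<in>B. {a, b'} \<in> E" "\<forall>a'\<in>A. {b, a'} \<in> E"
  shows "connected_graph W E"
proof -
  define R where "R x y \<longleftrightarrow> x \<in> W \<and> y \<in> W \<and> {x, y} \<in> E" for x y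
  have sym: "R x y \<Longrightarrow> R y x" for x y
    unfolding R_def by (simp add: insert_commute)
  have "R\<^sup>*\<^sup>* u b \<and> R\<^sup>*\<^sup>* b u" if "u \<in> W" for u
  proof (cases "u \<in> A")
    case True
    then have "R u b" using assms that unfolding R_def by (auto simp: insert_commute)
    then show ?thesis using sym by blast
  next
    case False
    then have "R u a" "R a b" using assms that unfolding R_def by (auto simp: insert_commute)
    then show ?thesis using sym by (meson converse_rtranclp_into_rtranclp r_into_rtranclp)
  qed
  then have "R\<^sup>*\<^sup>* u v" if "u \<in> W" "v \<in> W" for u v
    using that by (meson rtranclp_trans)
  then show ?thesis unfolding connected_graph_def R_def by blast
qed

lemma card_co_nbrs_le_added_edges:
  assumes "finite W" "X \<union> Y = W" "X \<inter> Y = {}" "w \<in> X"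
    and non_adj: "\<forall>u\<in>X. \<exists>v\<in>Y. {u, v} \<notin> E"
    and cross: "\<forall>a\<in>X. \<forall>b\<in>Y. {a, b} \<in> E \<union> F"
  shows "card (co_nbrs W E w) \<le> card {e\<in>F. e \<subseteq> W}"
proof -
  obtain f where f: "\<forall>u\<in>X. f u \<in> Y \<and> {u, f u} \<notin> E"
    using non_adj by metis
  define g where "g u = (if u \<in> X then {u, f u} else {u, w})" for u
  have "inj_on g (co_nbrs W E w)"
    using f assms(2-4) unfolding inj_on_def g_def co_nbrs_def by (auto simp: doubleton_eq_iff)
  moreover have "g u \<in> {e\<in>F. e \<subseteq> W}" if u: "u \<in> co_nbrs W E w" for u
  proof (cases "u \<in> X")
    case True
    then show ?thesis using f cross u assms(2) unfolding g_def co_nbrs_def by auto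
  next
    case False
    then have "u \<in> Y" using u assms(2) unfolding co_nbrs_def by blast
    then have "{u, w} \<in> E \<union> F" using cross assms(4) by (metis insert_commute)
    then show ?thesis using False u assms(2,4) unfolding g_def co_nbrs_def by auto
  qed
  then have "g ` co_nbrs W E w \<subseteq> {e\<in>F. e \<subseteq> W}" by blast
  moreover have "finite {e\<in>F. e \<subseteq> W}"
    using \<open>finite W\<close> by (auto intro: finite_subset[of _ "Pow W"])
  ultimately show ?thesis by (rule card_inj_on_le)
qed

lemma join_completion_co_nbrs_card_le:
  assumes "finite W" "\<not> connected_graph W E"
    and "A \<union> B = W" "A \<inter> B = {}" "A \<noteq> {}" "B \<noteq> {}"
    and cross: "\<forall>a\<in>A. \<forall>b\<in>B. {a, b} \<in> E \<union> F"
  shows "\<exists>w\<in>W. card (co_nbrs W E w) \<le> card {e\<in>F. e \<subseteq> W}"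
proof -
  have "(\<forall>a\<in>A. \<exists>b\<in>B. {a, b} \<notin> E) \<or> (\<forall>b\<in>B. \<exists>a\<in>A. {b, a} \<notin> E)"
    using connected_graph_if_cross_dominated[of A B W] assms(2,3) by blast
  then show ?thesis
  proof
    assume "\<forall>a\<in>A. \<exists>b\<in>B. {a, b} \<notin> E"
    moreover obtain w where "w \<in> A" using \<open>A \<noteq> {}\<close> by blast
    ultimately show ?thesis
      using card_co_nbrs_le_added_edges[of W A B w E F] assms by blast
  next
    assume "\<forall>b\<in>B. \<exists>a\<in>A. {b, a} \<notin> E"
    moreover obtain w where "w \<in> B" using \<open>B \<noteq> {}\<close> by blast
    moreover have "\<forall>b\<in>B. \<forall>a\<in>A. {b, a} \<in> E \<union> F"
      using cross by (metis insert_commute)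
    ultimately show ?thesis
      using card_co_nbrs_le_added_edges[of W B A w E F] assms by blast
  qed
qed

lemma sum_card_edges_within_le:
  assumes "finite F" "\<forall>e\<in>F. e \<noteq> {}" "finite I"
    and "\<forall>i\<in>I. \<forall>j\<in>I. i \<noteq> j \<longrightarrow> W i \<inter> W j = {}"
  shows "(\<Sum>i\<in>I. card {e\<in>F. e \<subseteq> W i}) \<le> card F"
proof -
  have "(\<Sum>i\<in>I. card {e\<in>F. e \<subseteq> W i}) = card (\<Union>i\<in>I. {e\<in>F. e \<subseteq> W i})"
  proof (rule card_UN_disjoint[symmetric])
    show "\<forall>i\<in>I. \<forall>j\<in>I. i \<noteq> j \<longrightarrow> {e\<in>F. e \<subseteq> W i} \<inter> {e\<in>F. e \<subseteq> W j} = {}"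
    proof (intro ballI impI)
      fix i j assume "i \<in> I" "j \<in> I" "i \<noteq> j"
      then have "e \<subseteq> W i \<Longrightarrow> e \<subseteq> W j \<Longrightarrow> e = {}" for e using assms(4) by blast
      then show "{e\<in>F. e \<subseteq> W i} \<inter> {e\<in>F. e \<subseteq> W j} = {}" using assms(2) by blast
    qed
  qed (use assms(1,3) in auto)
  also have "\<dots> \<le> card F" using assms(1) by (intro card_mono) auto
  finally show ?thesis .
qed

lemma vertex_separator_contains_minimal:
  assumes "finite V" "vertex_separator V E S"
  shows "\<exists>S'\<subseteq>S. minimal_vertex_separator V E S'"
  using assms(2)
proof (induction "card S" arbitrary: S rule: less_induct)
  case less
  show ?case
  proof (cases "minimal_vertex_separator V E S")
    case False
    then obtain S' where S': "S' \<subset> S" "vertex_separator V E S'"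
      using less.prems unfolding minimal_vertex_separator_def by blast
    have "finite S"
      using less.prems assms(1) finite_subset unfolding vertex_separator_def by blast
    then have "card S' < card S" using S'(1) psubset_card_mono by blast
    then show ?thesis using less.hyps S' by (meson order.trans psubset_imp_subset)
  qed blast
qed

lemma minimum_vertex_separator_card_le:
  assumes "finite V" "minimum_vertex_separator V E S" "vertex_separator V E T"
  shows "card S \<le> card T"
proof -
  obtain T' where "T' \<subseteq> T" "minimal_vertex_separator V E T'"
    using vertex_separator_contains_minimal[OF assms(1,3)] by blast
  moreover have "finite T"
    using assms(1,3) finite_subset unfolding vertex_separator_def by blast
  ultimately show ?thesis
    using assms(2) card_mono unfolding minimum_vertex_separator_def by (meson order.trans)
qed

lemma k_connected_imp_connected: "k_connected V E k \<Longrightarrow> connected_graph V E"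
  unfolding k_connected_def minimum_vertex_separator_def minimal_vertex_separator_def
    vertex_separator_def by blast

lemma k_connected_card_ge:
  assumes "finite V" "k_connected V E k"
  shows "k + 2 \<le> card V"
proof -
  obtain S where S: "vertex_separator V E S" "card S = k"
    using assms(2) unfolding k_connected_def minimum_vertex_separator_def
      minimal_vertex_separator_def by blast
  then obtain u v where "u \<in> V - S" "v \<in> V - S" "u \<noteq> v"
    unfolding vertex_separator_def connected_graph_def by blast
  then have "2 \<le> card (V - S)"
    using assms(1) card_mono[of "V - S" "{u, v}"] by auto
  moreover have "S \<subseteq> V" using S(1) unfolding vertex_separator_def by blast
  ultimately show ?thesis
    using S(2) assms(1) card_Diff_subset[of S V] card_mono[of V S] finite_subset by fastforce
qed

lemma k_connected_induced_connected:
  assumes "finite V" "k_connected V E k" "W \<subseteq> V" "card (V - W) < k"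
  shows "connected_graph W (induced_edges E W)"
proof (rule ccontr)
  assume "\<not> connected_graph W (induced_edges E W)"
  moreover have "V - (V - W) = W" using assms(3) by blast
  ultimately have "vertex_separator V E (V - W)"
    using k_connected_imp_connected[OF assms(2)] unfolding vertex_separator_def by auto
  moreover obtain S where "minimum_vertex_separator V E S" "card S = k"
    using assms(2) unfolding k_connected_def by blast
  ultimately show False
    using minimum_vertex_separator_card_le[OF assms(1)] assms(4) by fastforce
qed

lemma cograph_edge: "cograph V E \<Longrightarrow> e \<in> E \<Longrightarrow> e \<noteq> {} \<and> e \<subseteq> V"
  by (induction rule: cograph.induct) auto

lemma cograph_nonempty: "cograph V E \<Longrightarrow> V \<noteq> {}"
  by (induction rule: cograph.induct) auto

lemma cograph_induced_edges_empty: "cograph V E \<Longrightarrow> induced_edges E {} = {}"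
  using cograph_edge unfolding induced_edges_def by blast

lemma cograph_induced:
  assumes "cograph V E" "W \<subseteq> V" "W \<noteq> {}"
  shows "cograph W (induced_edges E W)"
  using assms
proof (induction arbitrary: W rule: cograph.induct)
  case (single v)
  then have "W = {v}" by blast
  then show ?case by (simp add: induced_edges_def cograph.single)
next
  case (union V1 E1 V2 E2)
  define W1 W2 where "W1 = W \<inter> V1" and "W2 = W \<inter> V2"
  have W: "W = W1 \<union> W2" "W1 \<inter> W2 = {}"
    using union.prems(1) union.hyps(3) unfolding W1_def W2_def by blast+
  have IH: "W1 \<noteq> {} \<Longrightarrow> cograph W1 (induced_edges E1 W1)"
    "W2 \<noteq> {} \<Longrightarrow> cograph W2 (induced_edges E2 W2)"
    using union.IH(1)[of W1] union.IH(2)[of W2] unfolding W1_def W2_def by auto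
  have edges: "induced_edges (E1 \<union> E2) W = induced_edges E1 W1 \<union> induced_edges E2 W2"
    using cograph_edge[OF union.hyps(1)] cograph_edge[OF union.hyps(2)]
    unfolding induced_edges_def W1_def W2_def by blast
  consider "W1 = {}" | "W2 = {}" | "W1 \<noteq> {}" "W2 \<noteq> {}" by blast
  then show ?case
  proof cases
    case 1
    then show ?thesis
      using W IH(2) union.prems(2) cograph_induced_edges_empty[OF union.hyps(1)] unfolding edges by simp
  next
    case 2
    then show ?thesis
      using W IH(1) union.prems(2) cograph_induced_edges_empty[OF union.hyps(2)] unfolding edges by simp
  next
    case 3
    then show ?thesis using W IH unfolding edges by (simp add: cograph.union)
  qed
next
  case (join V1 E1 V2 E2)
  define W1 W2 where "W1 = W \<inter> V1" and "W2 = W \<inter> V2"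
  have W: "W = W1 \<union> W2" "W1 \<inter> W2 = {}"
    using join.prems(1) join.hyps(3) unfolding W1_def W2_def by blast+
  have IH: "W1 \<noteq> {} \<Longrightarrow> cograph W1 (induced_edges E1 W1)"
    "W2 \<noteq> {} \<Longrightarrow> cograph W2 (induced_edges E2 W2)"
    using join.IH(1)[of W1] join.IH(2)[of W2] unfolding W1_def W2_def by auto
  have edges: "induced_edges (E1 \<union> E2 \<union> {{u, v} | u v. u \<in> V1 \<and> v \<in> V2}) W =
      induced_edges E1 W1 \<union> induced_edges E2 W2 \<union> {{u, v} | u v. u \<in> W1 \<and> v \<in> W2}"
    using cograph_edge[OF join.hyps(1)] cograph_edge[OF join.hyps(2)] join.hyps(3)
    unfolding induced_edges_def W1_def W2_def by (auto simp: doubleton_eq_iff) blast+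
  consider "W1 = {}" | "W2 = {}" | "W1 \<noteq> {}" "W2 \<noteq> {}" by blast
  then show ?case
  proof cases
    case 1
    then show ?thesis
      using W IH(2) join.prems(2) cograph_induced_edges_empty[OF join.hyps(1)] unfolding edges by simp
  next
    case 2
    then show ?thesis
      using W IH(1) join.prems(2) cograph_induced_edges_empty[OF join.hyps(2)] unfolding edges by simp
  next
    case 3
    then show ?thesis using W IH unfolding edges by (simp add: cograph.join)
  qed
qed

lemma connected_cograph_is_join:
  assumes "cograph V E" "connected_graph V E" "2 \<le> card V"
  shows "\<exists>A B. A \<union> B = V \<and> A \<inter> B = {} \<and> A \<noteq> {} \<and> B \<noteq> {} \<and> (\<forall>a\<in>A. \<forall>b\<in>B. {a, b} \<in> E)"
  using assms(1)
proof cases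
  case (single v)
  then show ?thesis using assms(3) by simp
next
  case (union V1 E1 V2 E2)
  obtain u v where "u \<in> V1" "v \<in> V2"
    using cograph_nonempty union(3,4) by blast
  moreover have "\<forall>e\<in>E. e \<subseteq> V1 \<or> e \<inter> V1 = {}"
    using cograph_edge[OF union(3)] cograph_edge[OF union(4)] union(1,2,5) by blast
  ultimately have "v \<in> V1"
    using connected_graph_edge_closed[OF assms(2), of u V1 v] union(1) by blast
  then show ?thesis using \<open>v \<in> V2\<close> union(5) by blast
next
  case (join V1 E1 V2 E2)
  then show ?thesis using cograph_nonempty[OF join(3)] cograph_nonempty[OF join(4)] by blast
qed

lemma ct_edges_subset_leaves: "e \<in> ct_edges t \<Longrightarrow> e \<noteq> {} \<and> e \<subseteq> ct_leaves t"
  by (induction t arbitrary: e) (fastforce simp: in_set_conv_nth split: if_splits)+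

lemma ct_leaves_nonempty: "ct_wf t \<Longrightarrow> ct_leaves t \<noteq> {}"
proof (induction t)
  case (Node b ts)
  then obtain t where "t \<in> set ts" by (cases ts) auto
  with Node show ?case by auto
qed simp

lemma ct_child_unique:
  "\<lbrakk>ct_wf (Node b ts); i < length ts; j < length ts; u \<in> ct_leaves (ts!i); u \<in> ct_leaves (ts!j)\<rbrakk>
   \<Longrightarrow> i = j"
  by auto

lemma ct_union_not_connected:
  assumes wf: "ct_wf (Node False ts)"
  shows "\<not> connected_graph (ct_leaves (Node False ts)) (ct_edges (Node False ts))"
proof
  assume conn: "connected_graph (ct_leaves (Node False ts)) (ct_edges (Node False ts))"
  have len: "0 < length ts" "1 < length ts" using wf by auto
  have disj: "\<And>j. j < length ts \<Longrightarrow> j \<noteq> 0 \<Longrightarrow> ct_leaves (ts!j) \<inter> ct_leaves (ts!0) = {}"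
    using wf len by simp
  have sub: "ct_leaves (ts!j) \<subseteq> ct_leaves (Node False ts)" if "j < length ts" for j
    using nth_mem[OF that] by auto
  have "ct_leaves (ts!j) \<noteq> {}" if "j < length ts" for j
  proof -
    have "ct_wf (ts!j)" using wf nth_mem[OF that] by simp
    then show ?thesis by (rule ct_leaves_nonempty)
  qed
  then obtain u v where u: "u \<in> ct_leaves (ts!0)" and v: "v \<in> ct_leaves (ts!1)"
    using len by blast
  have "\<forall>e\<in>ct_edges (Node False ts). e \<subseteq> ct_leaves (ts!0) \<or> e \<inter> ct_leaves (ts!0) = {}"
  proof
    fix e assume "e \<in> ct_edges (Node False ts)"
    then obtain j where "j < length ts" "e \<subseteq> ct_leaves (ts!j)"
      using ct_edges_subset_leaves by (fastforce simp: in_set_conv_nth)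
    then show "e \<subseteq> ct_leaves (ts!0) \<or> e \<inter> ct_leaves (ts!0) = {}"
      using disj by (cases "j = 0") auto
  qed
  then have "v \<in> ct_leaves (ts!0)"
    using connected_graph_edge_closed[OF conn, of u _ v] u v sub len by blast
  then show False using v disj[of 1] len by auto
qed

lemma induced_edges_ct_child:
  assumes wf: "ct_wf (Node b ts)" and i: "i < length ts"
  shows "induced_edges (ct_edges (Node b ts)) (ct_leaves (ts!i)) = ct_edges (ts!i)"
proof (intro equalityI subsetI)
  fix e assume e: "e \<in> induced_edges (ct_edges (Node b ts)) (ct_leaves (ts!i))"
  then consider (inner) j where "j < length ts" "e \<in> ct_edges (ts!j)"
    | (cross) u v p q where "e = {u, v}" "p < length ts" "q < length ts" "p \<noteq> q"
      "u \<in> ct_leaves (ts!p)" "v \<in> ct_leaves (ts!q)"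
    unfolding induced_edges_def by (auto simp: in_set_conv_nth split: if_splits)
  then show "e \<in> ct_edges (ts!i)"
  proof cases
    case inner
    then have "j = i"
      using ct_edges_subset_leaves[of e] ct_child_unique[OF wf] e i
      unfolding induced_edges_def by blast
    then show ?thesis using inner by simp
  next
    case cross
    then have "p = i" "q = i"
      using ct_child_unique[OF wf] e i unfolding induced_edges_def by blast+
    then show ?thesis using cross by simp
  qed
next
  fix e assume "e \<in> ct_edges (ts!i)"
  then show "e \<in> induced_edges (ct_edges (Node b ts)) (ct_leaves (ts!i))"
    using ct_edges_subset_leaves i unfolding induced_edges_def by (auto dest: nth_mem)
qed

lemma co_nbrs_join_child:
  assumes T: "is_cotree V E (Node True ts)" and i: "i < length ts" and w: "w \<in> ct_leaves (ts!i)"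
  shows "co_nbrs V E w = co_nbrs (ct_leaves (ts!i)) (induced_edges E (ct_leaves (ts!i))) w"
proof -
  have wf: "ct_wf (Node True ts)" and V: "V = \<Union> (set (map ct_leaves ts))"
    and E: "E = ct_edges (Node True ts)"
    using T unfolding is_cotree_def by auto
  have "u \<in> ct_leaves (ts!i)" if u: "u \<in> V" "{u, w} \<notin> E" for u
  proof -
    obtain t where "t \<in> set ts" "u \<in> ct_leaves t" using u(1) V by auto
    then obtain j where j: "j < length ts" "u \<in> ct_leaves (ts!j)" by (metis in_set_conv_nth)
    have "j = i"
    proof (rule ccontr)
      assume "j \<noteq> i"
      then have "{u, w} \<in> ct_edges (Node True ts)" using j i w by fastforce
      then show False using u(2) E by simp
    qed
    then show ?thesis using j by simp
  qed
  moreover have "ct_leaves (ts!i) \<subseteq> V" using V i by (auto dest: nth_mem)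
  ultimately show ?thesis using w unfolding co_nbrs_def induced_edges_def by auto
qed

lemma join_child_co_nbrs_le_added_edges:
  assumes T: "is_cotree V E (Node True ts)" and i: "i < length ts"
    and two: "2 \<le> card (ct_leaves (ts!i))"
    and cog: "cograph V (E \<union> F)"
    and conn: "connected_graph (ct_leaves (ts!i)) (induced_edges (E \<union> F) (ct_leaves (ts!i)))"
  shows "\<exists>w\<in>ct_leaves (ts!i). card (co_nbrs V E w) \<le> card {e\<in>F. e \<subseteq> ct_leaves (ts!i)}"
proof -
  define W where "W = ct_leaves (ts!i)"
  have wf: "ct_wf (Node True ts)" and E: "E = ct_edges (Node True ts)"
    and WV: "W \<subseteq> V"
    using T i unfolding is_cotree_def W_def by (auto dest: nth_mem)
  have "finite W" using two unfolding W_def by (metis card.infinite not_numeral_le_zero)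
  have "W \<noteq> {}" using two unfolding W_def by (metis card.empty not_numeral_le_zero)
  then have "cograph W (induced_edges (E \<union> F) W)"
    using cograph_induced[OF cog WV] by blast
  from connected_cograph_is_join[OF this conn[folded W_def] two[folded W_def]]
  obtain A B where AB: "A \<union> B = W" "A \<inter> B = {}" "A \<noteq> {}" "B \<noteq> {}"
    and join: "\<forall>a\<in>A. \<forall>b\<in>B. {a, b} \<in> induced_edges (E \<union> F) W"
    by blast
  obtain cs where cs: "ts!i = Node False cs"
  proof (cases "ts!i")
    case (Leaf v)
    then show ?thesis using two by simp
  next
    case (Node c cs)
    moreover have "ct_label_differs True (ts!i)" using wf nth_mem[OF i] by simp
    ultimately show ?thesis using that by simp
  qed
  have "ct_wf (ts!i)" using wf nth_mem[OF i] by simp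
  then have "\<not> connected_graph W (induced_edges E W)"
    using ct_union_not_connected induced_edges_ct_child[OF wf i] unfolding E W_def cs by metis
  moreover have "\<forall>a\<in>A. \<forall>b\<in>B. {a, b} \<in> induced_edges E W \<union> F"
    using join unfolding induced_edges_def by blast
  ultimately obtain w where
    "w \<in> W" "card (co_nbrs W (induced_edges E W) w) \<le> card {e\<in>F. e \<subseteq> W}"
    using join_completion_co_nbrs_card_le[OF \<open>finite W\<close>] AB by blast
  then show ?thesis using co_nbrs_join_child[OF T i] unfolding W_def by auto
qed

lemma cotree_root_join:
  assumes "connected_graph V E" "is_cotree V E (Node b ts)"
  shows b
  using assms ct_union_not_connected[of ts] unfolding is_cotree_def by (cases b) auto

lemma large_child_co_nbrs_le_added_edges:
  assumes "finite V" "is_cotree V E (Node True ts)" "k_connected V E k"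
    and "cograph V (E \<union> F)" "k_connected V (E \<union> F) (k + 1)"
    and i: "i < length ts" and W: "card (ct_leaves (ts!i)) = card V - k"
  shows "\<exists>w\<in>ct_leaves (ts!i). card (co_nbrs V E w) \<le> card {e\<in>F. e \<subseteq> ct_leaves (ts!i)}"
proof -
  have WV: "ct_leaves (ts!i) \<subseteq> V"
    using assms(2) i unfolding is_cotree_def by (auto dest: nth_mem)
  have "k + 2 \<le> card V" using k_connected_card_ge[OF assms(1,3)] .
  then have "card (V - ct_leaves (ts!i)) < k + 1" "2 \<le> card (ct_leaves (ts!i))"
    using W card_Diff_subset[OF finite_subset[OF WV assms(1)] WV] by auto
  then show ?thesis
    using join_child_co_nbrs_le_added_edges[OF assms(2) i _ assms(4)]
      k_connected_induced_connected[OF assms(1,5) WV] by blast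
qed

theorem lemma4:
  fixes V :: "'a set" and E :: "'a set set" and k :: nat and b :: bool
    and ws :: "'a cotree list" and x :: "nat \<Rightarrow> 'a"
  assumes "simple_graph V E"
    and "cograph V E"
    and "k_connected V E k"
    and "is_cotree V E (Node b ws)"
    and "\<And>i. \<lbrakk>i < length ws; card (ct_leaves (ws!i)) = card V - k\<rbrakk> \<Longrightarrow>
           x i \<in> ct_leaves (ws!i) \<and>
           (\<forall>y\<in>ct_leaves (ws!i). card (co_nbrs V E (x i)) \<le> card (co_nbrs V E y))"
  shows "\<forall>Eca. Eca \<subseteq> compl_edges V E \<and> cograph V (E \<union> Eca) \<and> k_connected V (E \<union> Eca) (k + 1)
           \<longrightarrow> card Eca \<ge> (\<Sum>i\<in>{i. i < length ws \<and> card (ct_leaves (ws!i)) = card V - k}.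
                              card (co_nbrs V E (x i)))"
proof (intro allI impI)
  fix Eca
  assume "Eca \<subseteq> compl_edges V E \<and> cograph V (E \<union> Eca) \<and> k_connected V (E \<union> Eca) (k + 1)"
  then have Eca: "Eca \<subseteq> compl_edges V E" and cog: "cograph V (E \<union> Eca)"
    and conn: "k_connected V (E \<union> Eca) (k + 1)" by blast+
  have finV: "finite V" using assms(1) unfolding simple_graph_def by blast
  have "b" using cotree_root_join k_connected_imp_connected[OF assms(3)] assms(4) by blast
  then have T: "is_cotree V E (Node True ws)" using assms(4) by simp
  define I where "I = {i. i < length ws \<and> card (ct_leaves (ws!i)) = card V - k}"
  have "card (co_nbrs V E (x i)) \<le> card {e\<in>Eca. e \<subseteq> ct_leaves (ws!i)}" if "i \<in> I" for i
    using large_child_co_nbrs_le_added_edges[OF finV T assms(3) cog conn] assms(5) that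
    unfolding I_def by (blast intro: le_trans)
  then have "(\<Sum>i\<in>I. card (co_nbrs V E (x i))) \<le> (\<Sum>i\<in>I. card {e\<in>Eca. e \<subseteq> ct_leaves (ws!i)})"
    by (rule sum_mono)
  also have "\<dots> \<le> card Eca"
  proof (rule sum_card_edges_within_le)
    show "finite Eca"
      using Eca finV unfolding compl_edges_def by (auto intro: finite_subset[of _ "Pow V"])
    show "\<forall>e\<in>Eca. e \<noteq> {}" using Eca unfolding compl_edges_def by auto
    show "\<forall>i\<in>I. \<forall>j\<in>I. i \<noteq> j \<longrightarrow> ct_leaves (ws!i) \<inter> ct_leaves (ws!j) = {}"
      using T unfolding I_def is_cotree_def by simp
  qed (simp add: I_def)
  finally show "(\<Sum>i\<in>{i. i < length ws \<and> card (ct_leaves (ws!i)) = card V - k}.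
      card (co_nbrs V E (x i))) \<le> card Eca" unfolding I_def .
qed

end
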